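(* Let $f:X\to Y$ be continuous and let $\Phi:Y\times[0,1]\to Z$ be a proper homotopy (a homotopy that is proper as a map). Then $L(\Phi\circ(f\times\mathrm{id}_{[0,1]}))=\Phi(L(f)\times[0,1])$.
   Context: All topological spaces are Hausdorff, second countable and locally compact. A continuous map is proper if preimages of compact sets are compact. The limit set $L(f)$ of a continuous map $f:X\to Y$ is the set of all $y\in Y$ for which there is a sequence $(x_n)$ in $X$ with no limit points in $X$ such that $f(x_n)\to y$. *)

theory Defs
  imports "HOL-Analysis.Analysis"
begin

definition good_space :: "'a topology \<Rightarrow> bool" where
  "good_space X \<longleftrightarrow> Hausdorff_space X \<and> second_countable X \<and> locally_compact_space X"

definition cproper_map :: "'a topology \<Rightarrow> 'b topology \<Rightarrow> ('a \<Rightarrow> 'b) \<Rightarrow> bool" where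
  "cproper_map X Y f \<longleftrightarrow> continuous_map X Y f \<and>
     (\<forall>K. compactin Y K \<longrightarrow> compactin X {x \<in> topspace X. f x \<in> K})"

definition unit_interval :: "real topology" where
  "unit_interval = subtopology euclideanreal {0..1}"

definition seq_limit_point :: "'a topology \<Rightarrow> (nat \<Rightarrow> 'a) \<Rightarrow> 'a \<Rightarrow> bool" where
  "seq_limit_point X s p \<longleftrightarrow> p \<in> topspace X \<and>
     (\<forall>U. openin X U \<and> p \<in> U \<longrightarrow> (\<exists>\<^sub>F n in sequentially. s n \<in> U))"

definition limit_set :: "'a topology \<Rightarrow> 'b topology \<Rightarrow> ('a \<Rightarrow> 'b) \<Rightarrow> 'b set" where
  "limit_set X Y f = {y \<in> topspace Y. \<exists>s. (\<forall>n. s n \<in> topspace X) \<and>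
      (\<forall>p. \<not> seq_limit_point X s p) \<and> limitin Y (f \<circ> s) y sequentially}"

end

theory Submission
  imports Defs
begin

(* For every space T, L(f \<times> id\<^sub>T) = L(f) \<times> T: if (x\<^sub>n, t\<^sub>n) has
   no limit point while (f x\<^sub>n, t\<^sub>n) \<rightarrow> (y, t), then t\<^sub>n \<rightarrow> t, so a limit point p of
   (x\<^sub>n) would make (p, t) a limit point of (x\<^sub>n, t\<^sub>n). And L(\<Phi> \<circ> h) = \<Phi>(L(h)) for
   proper \<Phi>: if \<Phi>(h(s\<^sub>n)) \<rightarrow> z, then h(s\<^sub>n) eventually lies in the compact preimage
   of a compact neighbourhood of z, so it has a limit point w, by first countability a
   subsequence converges to w, and z = \<Phi>(w) by uniqueness of limits in Z. *)

lemma strict_mono_choice_frequently: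
  fixes P :: "nat \<Rightarrow> nat \<Rightarrow> bool"
  assumes "\<And>k. \<exists>\<^sub>F n in sequentially. P k n"
  shows "\<exists>r. strict_mono r \<and> (\<forall>k. P k (r k))"
proof -
  have later: "\<exists>m>n. P k m" for k n
    using assms[of k] unfolding frequently_sequentially by (meson Suc_le_eq)
  have "\<exists>r. \<forall>k. P k (r k) \<and> r k < r (Suc k)"
    by (rule dependent_nat_choice) (use later in auto)
  then show ?thesis by (auto simp: strict_mono_Suc_iff)
qed

lemma seq_limit_point_subseq:
  assumes "strict_mono r" "seq_limit_point X (s \<circ> r) p"
  shows "seq_limit_point X s p"
  unfolding seq_limit_point_def
proof (intro conjI allI impI)
  show "p \<in> topspace X" using assms(2) by (simp add: seq_limit_point_def)
  fix U assume "openin X U \<and> p \<in> U"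
  then have "\<exists>\<^sub>F n in sequentially. s (r n) \<in> U"
    using assms(2) by (simp add: seq_limit_point_def)
  then show "\<exists>\<^sub>F n in sequentially. s n \<in> U"
    unfolding frequently_sequentially by (meson assms(1) le_trans seq_suble)
qed

lemma seq_limit_point_prod_fst:
  assumes "seq_limit_point (prod_topology X Y) s q"
  shows "seq_limit_point X (fst \<circ> s) (fst q)"
  unfolding seq_limit_point_def
proof (intro conjI allI impI)
  show "fst q \<in> topspace X" using assms by (auto simp: seq_limit_point_def)
  fix U assume "openin X U \<and> fst q \<in> U"
  then have "openin (prod_topology X Y) (U \<times> topspace Y)" "q \<in> U \<times> topspace Y"
    using assms by (auto simp: seq_limit_point_def openin_prod_Times_iff mem_Times_iff)
  then have "\<exists>\<^sub>F n in sequentially. s n \<in> U \<times> topspace Y"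
    using assms by (simp add: seq_limit_point_def)
  then show "\<exists>\<^sub>F n in sequentially. (fst \<circ> s) n \<in> U"
    by (rule frequently_elim1) (simp add: mem_Times_iff)
qed

lemma seq_limit_point_Pair:
  assumes "seq_limit_point X x p" "limitin Y y l sequentially"
  shows "seq_limit_point (prod_topology X Y) (\<lambda>n. (x n, y n)) (p, l)"
  unfolding seq_limit_point_def
proof (intro conjI allI impI)
  show "(p, l) \<in> topspace (prod_topology X Y)"
    using assms by (simp add: seq_limit_point_def limitin_topspace)
  fix W assume "openin (prod_topology X Y) W \<and> (p, l) \<in> W"
  then obtain U V where UV: "openin X U" "openin Y V" "p \<in> U" "l \<in> V" "U \<times> V \<subseteq> W"
    unfolding openin_prod_topology_alt by blast
  have "\<exists>\<^sub>F n in sequentially. x n \<in> U"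
    using assms(1) UV by (simp add: seq_limit_point_def)
  moreover have "\<forall>\<^sub>F n in sequentially. y n \<in> V"
    using assms(2) UV by (simp add: limitin_def)
  ultimately have "\<exists>\<^sub>F n in sequentially. y n \<in> V \<and> x n \<in> U"
    by (rule frequently_eventually_conj)
  then show "\<exists>\<^sub>F n in sequentially. (x n, y n) \<in> W"
    by (rule frequently_elim1) (use UV(5) in blast)
qed

lemma compactin_imp_seq_limit_point:
  assumes "compactin X K" "\<forall>\<^sub>F n in sequentially. s n \<in> K"
  shows "\<exists>l\<in>K. seq_limit_point X s l"
proof (rule ccontr)
  assume "\<not> ?thesis"
  then have "\<forall>l\<in>K. \<exists>U. openin X U \<and> l \<in> U \<and> (\<forall>\<^sub>F n in sequentially. s n \<notin> U)"
    using assms(1) compactin_subset_topspace by (fastforce simp: seq_limit_point_def not_frequently)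
  then obtain U where U: "\<And>l. l \<in> K \<Longrightarrow> openin X (U l) \<and> l \<in> U l \<and> (\<forall>\<^sub>F n in sequentially. s n \<notin> U l)"
    by metis
  then have "(\<forall>V \<in> U ` K. openin X V) \<and> K \<subseteq> \<Union> (U ` K)"
    by blast
  then obtain F where F: "finite F" "F \<subseteq> K" "K \<subseteq> (\<Union>l\<in>F. U l)"
    using assms(1) unfolding compactin_def by (metis finite_subset_image)
  have "\<forall>\<^sub>F n in sequentially. \<forall>l\<in>F. s n \<notin> U l"
    using F U by (intro eventually_ball_finite) auto
  with assms(2) have "\<forall>\<^sub>F n in sequentially. False"
    by eventually_elim (use F in blast)
  then show False by simp
qed

lemma first_countable_seq_limit_point_subseq:
  assumes "first_countable X" "seq_limit_point X s l"
  shows "\<exists>r. strict_mono r \<and> limitin X (s \<circ> r) l sequentially"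
proof -
  have l: "l \<in> topspace X" using assms(2) by (simp add: seq_limit_point_def)
  then obtain \<B> where "countable \<B>" and \<B>_open: "\<And>V. V \<in> \<B> \<Longrightarrow> openin X V"
    and \<B>_base: "\<And>U. openin X U \<Longrightarrow> l \<in> U \<Longrightarrow> \<exists>V\<in>\<B>. l \<in> V \<and> V \<subseteq> U"
    using assms(1) unfolding first_countable_def by metis
  define \<B>\<^sub>l where "\<B>\<^sub>l = {V \<in> \<B>. l \<in> V}"
  have "\<B>\<^sub>l \<noteq> {}" "countable \<B>\<^sub>l"
    using \<B>_base [OF openin_topspace l] \<open>countable \<B>\<close> by (auto simp: \<B>\<^sub>l_def)
  then obtain b :: "nat \<Rightarrow> 'a set" where b: "\<B>\<^sub>l = range b"
    by (metis range_from_nat_into)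
  \<comment> \<open>Intersecting makes the base decreasing, so that \<open>s (r k) \<in> b i\<close> for all \<open>k \<ge> i\<close>.\<close>
  have b_open: "openin X (\<Inter>i\<le>k. b i)" and b_mem: "l \<in> (\<Inter>i\<le>k. b i)" for k
    using b \<B>_open by (auto simp: \<B>\<^sub>l_def intro!: openin_INT2)
  have "\<exists>\<^sub>F n in sequentially. s n \<in> (\<Inter>i\<le>k. b i)" for k
    using assms(2) b_open b_mem unfolding seq_limit_point_def by blast
  then obtain r where r: "strict_mono r" and s_r: "\<And>k. s (r k) \<in> (\<Inter>i\<le>k. b i)"
    using strict_mono_choice_frequently [of "\<lambda>k n. s n \<in> (\<Inter>i\<le>k. b i)"] by blast
  have "limitin X (s \<circ> r) l sequentially"
    unfolding limitin_def
  proof (intro conjI allI impI)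
    fix U assume "openin X U \<and> l \<in> U"
    then obtain V where "V \<in> \<B>\<^sub>l" "V \<subseteq> U"
      using \<B>_base unfolding \<B>\<^sub>l_def by blast
    then obtain i where "b i \<subseteq> U"
      using b by blast
    then show "\<forall>\<^sub>F k in sequentially. (s \<circ> r) k \<in> U"
      unfolding eventually_sequentially using s_r by fastforce
  qed (fact l)
  with r show ?thesis by blast
qed

lemma compactin_first_countable_convergent_subseq:
  assumes "compactin X K" "first_countable X" "\<forall>\<^sub>F n in sequentially. s n \<in> K"
  obtains l r where "l \<in> K" "strict_mono r" "limitin X (s \<circ> r) l sequentially"
proof -
  obtain l where "l \<in> K" "seq_limit_point X s l"
    using compactin_imp_seq_limit_point [OF assms(1,3)] by blast
  with first_countable_seq_limit_point_subseq [OF assms(2)] that show ?thesis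
    by blast
qed

lemma first_countable_prod_topology:
  assumes "first_countable X" "first_countable Y"
  shows "first_countable (prod_topology X Y)"
  unfolding first_countable_def
proof
  fix z assume "z \<in> topspace (prod_topology X Y)"
  then obtain x y where z: "z = (x, y)" "x \<in> topspace X" "y \<in> topspace Y" by auto
  obtain \<B> where "countable \<B>" and \<B>_open: "\<And>V. V \<in> \<B> \<Longrightarrow> openin X V"
    and \<B>: "\<And>U. openin X U \<Longrightarrow> x \<in> U \<Longrightarrow> \<exists>V\<in>\<B>. x \<in> V \<and> V \<subseteq> U"
    using assms(1) z unfolding first_countable_def by metis
  obtain \<C> where "countable \<C>" and \<C>_open: "\<And>V. V \<in> \<C> \<Longrightarrow> openin Y V"
    and \<C>: "\<And>U. openin Y U \<Longrightarrow> y \<in> U \<Longrightarrow> \<exists>V\<in>\<C>. y \<in> V \<and> V \<subseteq> U"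
    using assms(2) z unfolding first_countable_def by metis
  show "\<exists>\<D>. countable \<D> \<and> (\<forall>V\<in>\<D>. openin (prod_topology X Y) V) \<and>
          (\<forall>W. openin (prod_topology X Y) W \<and> z \<in> W \<longrightarrow> (\<exists>V\<in>\<D>. z \<in> V \<and> V \<subseteq> W))"
  proof (intro exI conjI ballI allI impI)
    show "countable ((\<lambda>(U, V). U \<times> V) ` (\<B> \<times> \<C>))"
      using \<open>countable \<B>\<close> \<open>countable \<C>\<close> by blast
    show "openin (prod_topology X Y) D" if "D \<in> (\<lambda>(U, V). U \<times> V) ` (\<B> \<times> \<C>)" for D
      using that \<B>_open \<C>_open by (auto simp: openin_prod_Times_iff)
    fix W assume "openin (prod_topology X Y) W \<and> z \<in> W"
    then obtain U V where UV: "openin X U" "openin Y V" "x \<in> U" "y \<in> V" "U \<times> V \<subseteq> W"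
      unfolding openin_prod_topology_alt z by blast
    then obtain U' V' where "U' \<in> \<B>" "V' \<in> \<C>" "x \<in> U'" "y \<in> V'" "U' \<subseteq> U" "V' \<subseteq> V"
      using \<B> \<C> by meson
    with UV(5) z(1) show "\<exists>D \<in> (\<lambda>(U, V). U \<times> V) ` (\<B> \<times> \<C>). z \<in> D \<and> D \<subseteq> W"
      by (intro bexI [of _ "U' \<times> V'"]) auto
  qed
qed

lemma first_countable_unit_interval: "first_countable unit_interval"
  unfolding unit_interval_def
  by (simp add: metrizable_imp_first_countable metrizable_space_euclidean metrizable_space_subtopology)

lemma limit_setI:
  assumes "\<And>n. s n \<in> topspace X" "\<And>p. \<not> seq_limit_point X s p"
    and "limitin Y (f \<circ> s) y sequentially"
  shows "y \<in> limit_set X Y f"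
  unfolding limit_set_def using assms limitin_topspace [OF assms(3)] by blast

lemma limit_setE:
  assumes "y \<in> limit_set X Y f"
  obtains s where "\<And>n. s n \<in> topspace X" "\<And>p. \<not> seq_limit_point X s p"
    and "limitin Y (f \<circ> s) y sequentially"
  using assms unfolding limit_set_def by blast

lemma limit_set_prod_id:
  "limit_set (prod_topology X T) (prod_topology Y T) (\<lambda>(x, t). (f x, t))
     = limit_set X Y f \<times> topspace T"
proof (intro equalityI subsetI)
  fix q assume "q \<in> limit_set (prod_topology X T) (prod_topology Y T) (\<lambda>(x, t). (f x, t))"
  then obtain s where s: "\<And>n. s n \<in> topspace (prod_topology X T)"
      "\<And>p. \<not> seq_limit_point (prod_topology X T) s p"
    and lim: "limitin (prod_topology Y T) ((\<lambda>(x, t). (f x, t)) \<circ> s) q sequentially"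
    by (metis limit_setE)
  have lim_fst: "limitin Y (f \<circ> (fst \<circ> s)) (fst q) sequentially"
    and lim_snd: "limitin T (snd \<circ> s) (snd q) sequentially"
    using lim by (simp_all add: limitin_pairwise comp_def case_prod_beta)
  have "\<not> seq_limit_point X (fst \<circ> s) p" for p
  proof
    assume "seq_limit_point X (fst \<circ> s) p"
    then have "seq_limit_point (prod_topology X T) (\<lambda>n. ((fst \<circ> s) n, (snd \<circ> s) n)) (p, snd q)"
      using lim_snd by (rule seq_limit_point_Pair)
    with s(2) show False by simp
  qed
  with s(1) lim_fst have "fst q \<in> limit_set X Y f"
    by (intro limit_setI) (auto simp: mem_Times_iff)
  moreover have "snd q \<in> topspace T"
    using lim_snd by (rule limitin_topspace)
  ultimately show "q \<in> limit_set X Y f \<times> topspace T"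
    by (simp add: mem_Times_iff)
next
  fix q assume "q \<in> limit_set X Y f \<times> topspace T"
  then obtain y t where q: "q = (y, t)" "y \<in> limit_set X Y f" "t \<in> topspace T"
    by blast
  obtain s where s: "\<And>n. s n \<in> topspace X" "\<And>p. \<not> seq_limit_point X s p"
    and lim: "limitin Y (f \<circ> s) y sequentially"
    using q(2) by (metis limit_setE)
  show "q \<in> limit_set (prod_topology X T) (prod_topology Y T) (\<lambda>(x, t). (f x, t))"
  proof (rule limit_setI)
    show "(\<lambda>n. (s n, t)) n \<in> topspace (prod_topology X T)" for n
      using s(1) q(3) by simp
    show "\<not> seq_limit_point (prod_topology X T) (\<lambda>n. (s n, t)) p" for p
      using s(2) seq_limit_point_prod_fst [of X T "\<lambda>n. (s n, t)" p] by (auto simp: comp_def)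
    show "limitin (prod_topology Y T) ((\<lambda>(x, t). (f x, t)) \<circ> (\<lambda>n. (s n, t))) q sequentially"
      using lim q(1,3) by (simp add: limitin_pairwise comp_def)
  qed
qed

lemma continuous_map_image_limit_set:
  assumes "continuous_map Y Z g"
  shows "g ` limit_set X Y f \<subseteq> limit_set X Z (g \<circ> f)"
proof (rule image_subsetI)
  fix y assume "y \<in> limit_set X Y f"
  then obtain s where s: "\<And>n. s n \<in> topspace X" "\<And>p. \<not> seq_limit_point X s p"
    and lim: "limitin Y (f \<circ> s) y sequentially"
    by (metis limit_setE)
  have "limitin Z (g \<circ> f \<circ> s) (g y) sequentially"
    using continuous_map_limit [OF assms lim] by (simp add: comp_assoc)
  with s show "g y \<in> limit_set X Z (g \<circ> f)"
    by (rule limit_setI)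
qed

lemma limit_set_comp_proper_map_subset:
  assumes "cproper_map Y Z g" "f ` topspace X \<subseteq> topspace Y"
    and "first_countable Y" "locally_compact_space Z" "Hausdorff_space Z"
  shows "limit_set X Z (g \<circ> f) \<subseteq> g ` limit_set X Y f"
proof
  fix z assume "z \<in> limit_set X Z (g \<circ> f)"
  then obtain s where s: "\<And>n. s n \<in> topspace X" "\<And>p. \<not> seq_limit_point X s p"
    and lim: "limitin Z (g \<circ> f \<circ> s) z sequentially"
    by (metis limit_setE)
  obtain U K where UK: "openin Z U" "compactin Z K" "z \<in> U" "U \<subseteq> K"
    using assms(4) limitin_topspace [OF lim] unfolding locally_compact_space_def by blast
  have "compactin Y {y \<in> topspace Y. g y \<in> K}"
    using assms(1) UK(2) unfolding cproper_map_def by blast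
  moreover have "\<forall>\<^sub>F n in sequentially. (f \<circ> s) n \<in> {y \<in> topspace Y. g y \<in> K}"
  proof -
    have "\<forall>\<^sub>F n in sequentially. g (f (s n)) \<in> U"
      using lim UK(1,3) unfolding limitin_def by simp
    then show ?thesis
      by (rule eventually_mono) (use UK(4) s(1) assms(2) in auto)
  qed
  ultimately obtain y r where r: "strict_mono r" and lim_y: "limitin Y (f \<circ> s \<circ> r) y sequentially"
    using assms(3) by (blast elim: compactin_first_countable_convergent_subseq)
  have "limitin Z (g \<circ> f \<circ> s \<circ> r) z sequentially"
    using r lim by (rule limitin_subsequence)
  moreover have "limitin Z (g \<circ> f \<circ> s \<circ> r) (g y) sequentially"
    using assms(1) continuous_map_limit [of Y Z g, OF _ lim_y] by (simp add: cproper_map_def comp_assoc)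
  ultimately have "z = g y"
    using trivial_limit_sequentially assms(5) by (rule limitin_Hausdorff_unique)
  moreover have "y \<in> limit_set X Y f"
  proof (rule limit_setI)
    show "(s \<circ> r) n \<in> topspace X" for n
      using s(1) by simp
    show "\<not> seq_limit_point X (s \<circ> r) p" for p
      using s(2) seq_limit_point_subseq [OF r, of X s p] by blast
    show "limitin Y (f \<circ> (s \<circ> r)) y sequentially"
      using lim_y by (simp only: comp_assoc)
  qed
  ultimately show "z \<in> g ` limit_set X Y f" by blast
qed

lemma limit_set_comp_proper_map:
  assumes "cproper_map Y Z g" "f ` topspace X \<subseteq> topspace Y"
    and "first_countable Y" "locally_compact_space Z" "Hausdorff_space Z"
  shows "limit_set X Z (g \<circ> f) = g ` limit_set X Y f"
proof
  show "limit_set X Z (g \<circ> f) \<subseteq> g ` limit_set X Y f"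
    using assms by (rule limit_set_comp_proper_map_subset)
  show "g ` limit_set X Y f \<subseteq> limit_set X Z (g \<circ> f)"
    using assms(1) unfolding cproper_map_def by (intro continuous_map_image_limit_set) simp
qed

theorem corollary5:
  fixes X :: "'a topology" and Y :: "'b topology" and Z :: "'c topology"
    and f :: "'a \<Rightarrow> 'b" and \<Phi> :: "'b \<times> real \<Rightarrow> 'c"
  assumes "good_space X" and "good_space Y" and "good_space Z"
    and "continuous_map X Y f"
    and "cproper_map (prod_topology Y unit_interval) Z \<Phi>"
  shows "limit_set (prod_topology X unit_interval) Z (\<Phi> \<circ> (\<lambda>(x, t). (f x, t)))
         = \<Phi> ` (limit_set X Y f \<times> {0..1})"
proof -
  have "(\<lambda>(x, t). (f x, t)) ` topspace (prod_topology X unit_interval)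
          \<subseteq> topspace (prod_topology Y unit_interval)"
    using continuous_map_image_subset_topspace [OF assms(4)] by auto
  moreover have "first_countable (prod_topology Y unit_interval)"
    using assms(2) unfolding good_space_def
    by (simp add: first_countable_prod_topology first_countable_unit_interval
        second_countable_imp_first_countable)
  ultimately have "limit_set (prod_topology X unit_interval) Z (\<Phi> \<circ> (\<lambda>(x, t). (f x, t)))
      = \<Phi> ` limit_set (prod_topology X unit_interval) (prod_topology Y unit_interval) (\<lambda>(x, t). (f x, t))"
    using assms(3,5) unfolding good_space_def by (intro limit_set_comp_proper_map) auto
  also have "\<dots> = \<Phi> ` (limit_set X Y f \<times> {0..1})"
    by (simp add: limit_set_prod_id unit_interval_def)
  finally show ?thesis .
qed

end
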